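(* Let $n$ be a positive integer. For every irrational real $\xi$, $\lambda_n(\xi) = \max_{g \mid n} \lambda(g\xi)$, and for all reals $\xi \neq \xi'$, $\mu_n(\xi,\xi') = \max_{g\mid n} \mu(g\xi, g\xi')$, where $g$ ranges over the positive divisors of $n$.
   Context: For an irrational real $\xi$ and positive integer $n$, $\lambda_n(\xi) = \limsup_{s/t \to \xi} \dfrac{\gcd(t,n)}{t^2 \left| \frac{s}{t} - \xi\right|} \in \mathbb{R}\cup\{\infty\}$, the limsup being over rationals $s/t$ ($t>0$) tending to $\xi$; and $\lambda = \lambda_1$ is the classical Lagrange approximability. For reals $\xi\ne\xi'$, $\mu_n(\xi,\xi') = \sup_{(s,t)\in\mathbb{Z}^2\setminus\{0\}} \dfrac{\gcd(t,n)\,|\xi-\xi'|}{|s-t\xi|\,|s-t\xi'|} \in \mathbb{R}\cup\{\infty\}$ (with $\gcd(0,n)=n$), and $\mu=\mu_1$ is the classical Markoff approximability. *)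

theory Defs
  imports "HOL-Analysis.Analysis"
begin

definition lagr_term :: "nat \<Rightarrow> real \<Rightarrow> int \<Rightarrow> int \<Rightarrow> ereal" where
  "lagr_term n \<xi> s t =
     ereal (real_of_int (gcd t (int n)) / ((real_of_int t)\<^sup>2 * \<bar>real_of_int s / real_of_int t - \<xi>\<bar>))"

text \<open>lambda_n(xi) = limsup over rationals s/t (t > 0) tending to xi, written out as
  the infimum over eps > 0 of the supremum over s/t within distance eps of xi.\<close>
definition lambda_n :: "nat \<Rightarrow> real \<Rightarrow> ereal" where
  "lambda_n n \<xi> =
     (INF \<epsilon>\<in>{0<..}. SUP (s, t)\<in>{(s::int, t::int). t > 0 \<and>
          \<bar>real_of_int s / real_of_int t - \<xi>\<bar> < \<epsilon>}. lagr_term n \<xi> s t)"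

definition lagrange_approx :: "real \<Rightarrow> ereal" where
  "lagrange_approx \<xi> = lambda_n 1 \<xi>"

definition markoff_term :: "nat \<Rightarrow> real \<Rightarrow> real \<Rightarrow> int \<Rightarrow> int \<Rightarrow> ereal" where
  "markoff_term n \<xi> \<xi>' s t =
     (let d = \<bar>real_of_int s - real_of_int t * \<xi>\<bar> * \<bar>real_of_int s - real_of_int t * \<xi>'\<bar>
      in if d = 0 then \<infinity>
         else ereal (real_of_int (gcd t (int n)) * \<bar>\<xi> - \<xi>'\<bar> / d))"

definition mu_n :: "nat \<Rightarrow> real \<Rightarrow> real \<Rightarrow> ereal" where
  "mu_n n \<xi> \<xi>' = (SUP (s, t)\<in>(UNIV :: (int \<times> int) set) - {(0, 0)}. markoff_term n \<xi> \<xi>' s t)"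

definition markoff_approx :: "real \<Rightarrow> real \<Rightarrow> ereal" where
  "markoff_approx \<xi> \<xi>' = mu_n 1 \<xi> \<xi>'"

end

theory Submission
  imports Defs
begin

(* Write t = g t' with g = gcd t n. Then the term of lambda_n(xi) at s/t equals the term of
   lambda(g xi) at s/t', and |s/t - xi| < eps iff |s/t' - g xi| < g eps; conversely, for each
   divisor g of n the term of lambda(g xi) at s/t' is at most that of lambda_n(xi) at s/(g t'),
   because g divides gcd (g t') n. So every supremum defining lambda_n or mu_n is the maximum
   over divisors g of the corresponding supremum for g xi, and for lambda the limit eps -> 0
   commutes with this finite maximum since the suprema are monotone in eps. *)

lemma SUP_eq_Max_SUP:
  fixes F :: "'p \<Rightarrow> 'a::complete_linorder" and G :: "'i \<Rightarrow> 'q \<Rightarrow> 'a"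
  assumes "finite I" "I \<noteq> {}"
    and below: "\<And>i q. i \<in> I \<Longrightarrow> q \<in> B i \<Longrightarrow> \<exists>p\<in>A. G i q \<le> F p"
    and above: "\<And>p. p \<in> A \<Longrightarrow> \<exists>i\<in>I. \<exists>q\<in>B i. F p \<le> G i q"
  shows "(SUP p\<in>A. F p) = Max ((\<lambda>i. SUP q\<in>B i. G i q) ` I)"
proof (rule order.antisym)
  show "(SUP p\<in>A. F p) \<le> Max ((\<lambda>i. SUP q\<in>B i. G i q) ` I)"
  proof (rule SUP_least)
    fix p assume "p \<in> A"
    then obtain i q where i: "i \<in> I" and q: "q \<in> B i" and le: "F p \<le> G i q"
      using above by blast
    note le
    also have "G i q \<le> (SUP q\<in>B i. G i q)" using q by (rule SUP_upper)
    also have "\<dots> \<le> Max ((\<lambda>i. SUP q\<in>B i. G i q) ` I)" using \<open>finite I\<close> i by simp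
    finally show "F p \<le> Max ((\<lambda>i. SUP q\<in>B i. G i q) ` I)" .
  qed
  show "Max ((\<lambda>i. SUP q\<in>B i. G i q) ` I) \<le> (SUP p\<in>A. F p)"
    using assms(1,2) by (auto intro!: Max.boundedI SUP_least dest!: below intro: SUP_upper2)
qed

lemma INF_greaterThan_scale:
  fixes f :: "real \<Rightarrow> 'a::complete_lattice"
  assumes "c > 0"
  shows "(INF \<delta>\<in>{0<..}. f (c * \<delta>)) = (INF \<delta>\<in>{0<..}. f \<delta>)"
proof (rule INF_eq)
  show "\<exists>\<delta>'\<in>{0<..}. f (c * \<delta>) \<ge> f \<delta>'" if "\<delta> \<in> {0<..}" for \<delta>
    using that assms by (intro bexI[of _ "c * \<delta>"]) auto
  show "\<exists>\<delta>'\<in>{0<..}. f \<delta> \<ge> f (c * \<delta>')" if "\<delta> \<in> {0<..}" for \<delta>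
    using that assms by (intro bexI[of _ "\<delta> / c"]) auto
qed

lemma INF_greaterThan_Max_commute:
  fixes f :: "'i \<Rightarrow> real \<Rightarrow> 'a::{complete_linorder, dense_linorder}"
  assumes "finite I" "I \<noteq> {}" and mono: "\<And>i. i \<in> I \<Longrightarrow> mono (f i)"
  shows "(INF \<delta>\<in>{0<..}. Max ((\<lambda>i. f i \<delta>) ` I)) = Max ((\<lambda>i. INF \<delta>\<in>{0<..}. f i \<delta>) ` I)"
proof (rule order.antisym)
  show "(INF \<delta>\<in>{0<..}. Max ((\<lambda>i. f i \<delta>) ` I)) \<le> Max ((\<lambda>i. INF \<delta>\<in>{0<..}. f i \<delta>) ` I)"
  proof (rule dense_ge)
    fix b assume b: "Max ((\<lambda>i. INF \<delta>\<in>{0<..}. f i \<delta>) ` I) < b"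
    have "\<exists>\<delta>>0. f i \<delta> < b" if "i \<in> I" for i
    proof -
      have "(INF \<delta>\<in>{0<..}. f i \<delta>) < b"
        using b that \<open>finite I\<close> by (meson Max_ge finite_imageI image_eqI le_less_trans)
      then show ?thesis by (auto simp: INF_less_iff)
    qed
    then obtain \<delta> where \<delta>: "\<And>i. i \<in> I \<Longrightarrow> \<delta> i > 0 \<and> f i (\<delta> i) < b"
      by metis
    define \<delta>\<^sub>0 where "\<delta>\<^sub>0 = Min (\<delta> ` I)"
    have "\<delta>\<^sub>0 > 0" using assms(1,2) \<delta> by (simp add: \<delta>\<^sub>0_def)
    have "f i \<delta>\<^sub>0 < b" if "i \<in> I" for i
    proof -
      have "f i \<delta>\<^sub>0 \<le> f i (\<delta> i)"
        using mono[OF that] \<open>finite I\<close> that by (simp add: \<delta>\<^sub>0_def monoD)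
      with \<delta>[OF that] show ?thesis by (blast intro: le_less_trans)
    qed
    then have "Max ((\<lambda>i. f i \<delta>\<^sub>0) ` I) < b" using assms(1,2) by simp
    with \<open>\<delta>\<^sub>0 > 0\<close> show "(INF \<delta>\<in>{0<..}. Max ((\<lambda>i. f i \<delta>) ` I)) \<le> b"
      by (intro INF_lower2[of \<delta>\<^sub>0]) auto
  qed
  show "Max ((\<lambda>i. INF \<delta>\<in>{0<..}. f i \<delta>) ` I) \<le> (INF \<delta>\<in>{0<..}. Max ((\<lambda>i. f i \<delta>) ` I))"
    using assms(1,2) by (auto intro!: Max.boundedI INF_greatest intro: INF_lower2 Max_ge)
qed

lemma obtain_gcd_factor:
  fixes t :: int
  assumes "n > 0"
  obtains g t' where "g dvd n" "g > 0" "t = int g * t'" "gcd t (int n) = int g"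
proof
  show "nat (gcd t (int n)) dvd n" "nat (gcd t (int n)) > 0"
    using assms by (simp_all add: nat_dvd_iff)
  show "t = int (nat (gcd t (int n))) * (t div gcd t (int n))" "gcd t (int n) = int (nat (gcd t (int n)))"
    by simp_all
qed

lemma gcd_weight_ge_one:
  assumes "g dvd n" "n > 0"
  shows "1 \<le> real_of_int (gcd (int g * t) (int n)) / real g"
proof -
  have "int g \<le> gcd (int g * t) (int n)"
    using assms by (intro zdvd_imp_le) simp_all
  moreover have "g > 0" using assms by (simp add: dvd_pos_nat)
  ultimately show ?thesis by (simp add: field_simps)
qed

lemma diff_div_scale:
  fixes g :: nat and s t :: int
  assumes "g > 0" "t \<noteq> 0"
  shows "real_of_int s / real_of_int (int g * t) - \<xi> = (real_of_int s / real_of_int t - real g * \<xi>) / real g"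
  using assms by (simp add: field_simps)

lemma lagr_term_nonneg: "lagr_term n \<xi> s t \<ge> 0"
  unfolding lagr_term_def by simp

lemma markoff_term_nonneg: "markoff_term n \<xi> \<xi>' s t \<ge> 0"
  unfolding markoff_term_def Let_def by simp

lemma lagr_term_scale:
  assumes "g > 0" "t \<noteq> 0"
  shows "lagr_term n \<xi> s (int g * t)
       = ereal (real_of_int (gcd (int g * t) (int n)) / real g) * lagr_term 1 (real g * \<xi>) s t"
proof -
  have "(real_of_int (int g * t))\<^sup>2 * \<bar>real_of_int s / real_of_int (int g * t) - \<xi>\<bar>
      = real g * ((real_of_int t)\<^sup>2 * \<bar>real_of_int s / real_of_int t - real g * \<xi>\<bar>)"
    using assms unfolding diff_div_scale[OF assms]
    by (simp add: abs_divide abs_mult power2_eq_square field_simps)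
  then show ?thesis unfolding lagr_term_def by simp
qed

(* n > 0 keeps the weight positive, so that a vanishing denominator (value \<infinity>) is preserved. *)
lemma markoff_term_scale:
  assumes "g > 0" "n > 0"
  shows "markoff_term n \<xi> \<xi>' s (int g * t)
       = ereal (real_of_int (gcd (int g * t) (int n)) / real g)
           * markoff_term 1 (real g * \<xi>) (real g * \<xi>') s t"
proof -
  have "\<bar>real g * \<xi> - real g * \<xi>'\<bar> = real g * \<bar>\<xi> - \<xi>'\<bar>"
    by (simp add: abs_mult flip: right_diff_distrib)
  moreover have "gcd (int g * t) (int n) > 0" using assms by simp
  ultimately show ?thesis using assms
    unfolding markoff_term_def Let_def by (simp add: mult.commute mult.left_commute)
qed

lemma ereal_le_mult_ge_one:
  fixes x :: ereal
  assumes "1 \<le> c" "0 \<le> x"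
  shows "x \<le> ereal c * x"
  using ereal_mult_right_mono[of 1 "ereal c" x] assms by simp

definition near_fracs :: "real \<Rightarrow> real \<Rightarrow> (int \<times> int) set" where
  "near_fracs \<xi> \<epsilon> = {(s, t). t > 0 \<and> \<bar>real_of_int s / real_of_int t - \<xi>\<bar> < \<epsilon>}"

definition lagr_sup :: "nat \<Rightarrow> real \<Rightarrow> real \<Rightarrow> ereal" where
  "lagr_sup n \<xi> \<epsilon> = (SUP (s, t)\<in>near_fracs \<xi> \<epsilon>. lagr_term n \<xi> s t)"

lemma lambda_n_eq_INF_lagr_sup: "lambda_n n \<xi> = (INF \<epsilon>\<in>{0<..}. lagr_sup n \<xi> \<epsilon>)"
  unfolding lambda_n_def lagr_sup_def near_fracs_def ..

lemma mono_lagr_sup: "mono (lagr_sup n \<xi>)"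
  unfolding lagr_sup_def near_fracs_def by (intro monoI SUP_subset_mono) auto

lemma near_fracs_scale_iff:
  assumes "g > 0"
  shows "(s, int g * t) \<in> near_fracs \<xi> \<epsilon> \<longleftrightarrow> (s, t) \<in> near_fracs (real g * \<xi>) (real g * \<epsilon>)"
proof (cases "t > 0")
  case True
  then have "t \<noteq> 0" by simp
  have "\<bar>real_of_int s / real_of_int (int g * t) - \<xi>\<bar> < \<epsilon>
    \<longleftrightarrow> \<bar>real_of_int s / real_of_int t - real g * \<xi>\<bar> < real g * \<epsilon>"
    using assms True unfolding diff_div_scale[OF assms \<open>t \<noteq> 0\<close>]
    by (simp add: pos_divide_less_eq mult.commute)
  with True assms show ?thesis unfolding near_fracs_def by simp
next
  case False
  then show ?thesis using assms unfolding near_fracs_def by (simp add: zero_less_mult_iff)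
qed

lemma lagr_sup_eq_Max_divisors:
  assumes "n > 0"
  shows "lagr_sup n \<xi> \<epsilon> = Max ((\<lambda>g. lagr_sup 1 (real g * \<xi>) (real g * \<epsilon>)) ` {g. g dvd n})"
  unfolding lagr_sup_def
proof (rule SUP_eq_Max_SUP)
  show "finite {g. g dvd n}" "{g. g dvd n} \<noteq> {}" using assms by auto
next
  fix g q assume g: "g \<in> {g. g dvd n}" and q: "q \<in> near_fracs (real g * \<xi>) (real g * \<epsilon>)"
  obtain s t where [simp]: "q = (s, t)" by fastforce
  have "g > 0" using g assms by (simp add: dvd_pos_nat)
  have "t \<noteq> 0" using q by (simp add: near_fracs_def)
  have "(s, int g * t) \<in> near_fracs \<xi> \<epsilon>"
    using q near_fracs_scale_iff[OF \<open>g > 0\<close>] by simp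
  moreover have "lagr_term 1 (real g * \<xi>) s t \<le> lagr_term n \<xi> s (int g * t)"
    unfolding lagr_term_scale[OF \<open>g > 0\<close> \<open>t \<noteq> 0\<close>]
    using g assms by (intro ereal_le_mult_ge_one gcd_weight_ge_one lagr_term_nonneg) simp_all
  ultimately show "\<exists>p\<in>near_fracs \<xi> \<epsilon>. (case q of (s, t) \<Rightarrow> lagr_term 1 (real g * \<xi>) s t)
      \<le> (case p of (s, t) \<Rightarrow> lagr_term n \<xi> s t)"
    by (auto intro!: bexI[of _ "(s, int g * t)"])
next
  fix p assume p: "p \<in> near_fracs \<xi> \<epsilon>"
  obtain s t where [simp]: "p = (s, t)" by fastforce
  obtain g t' where g: "g dvd n" "g > 0" and t: "t = int g * t'" and gcd: "gcd t (int n) = int g"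
    using obtain_gcd_factor[OF assms] .
  have "t' \<noteq> 0" using p t by (auto simp: near_fracs_def)
  have "(s, t') \<in> near_fracs (real g * \<xi>) (real g * \<epsilon>)"
    using p t near_fracs_scale_iff[OF \<open>g > 0\<close>] by simp
  moreover have "lagr_term n \<xi> s t = lagr_term 1 (real g * \<xi>) s t'"
    using lagr_term_scale[OF \<open>g > 0\<close> \<open>t' \<noteq> 0\<close>] gcd g t by simp
  ultimately show "\<exists>g\<in>{g. g dvd n}. \<exists>q\<in>near_fracs (real g * \<xi>) (real g * \<epsilon>).
      (case p of (s, t) \<Rightarrow> lagr_term n \<xi> s t) \<le> (case q of (s, t) \<Rightarrow> lagr_term 1 (real g * \<xi>) s t)"
    using g by (auto intro!: bexI[of _ "(s, t')"])
qed

lemma lambda_n_eq_Max_divisors: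
  assumes "n > 0"
  shows "lambda_n n \<xi> = Max ((\<lambda>g. lagrange_approx (real g * \<xi>)) ` {g. g dvd n})"
proof -
  have fin: "finite {g. g dvd n}" "{g. g dvd n} \<noteq> {}" using assms by auto
  have mono: "mono (\<lambda>\<epsilon>. lagr_sup 1 (real g * \<xi>) (real g * \<epsilon>))" for g
    by (intro monoI monoD[OF mono_lagr_sup] mult_left_mono) simp_all
  have "lambda_n n \<xi> = (INF \<epsilon>\<in>{0<..}. Max ((\<lambda>g. lagr_sup 1 (real g * \<xi>) (real g * \<epsilon>)) ` {g. g dvd n}))"
    unfolding lambda_n_eq_INF_lagr_sup lagr_sup_eq_Max_divisors[OF assms] ..
  also have "\<dots> = Max ((\<lambda>g. INF \<epsilon>\<in>{0<..}. lagr_sup 1 (real g * \<xi>) (real g * \<epsilon>)) ` {g. g dvd n})"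
    using fin mono by (rule INF_greaterThan_Max_commute)
  also have "\<dots> = Max ((\<lambda>g. lagrange_approx (real g * \<xi>)) ` {g. g dvd n})"
    using assms unfolding lagrange_approx_def lambda_n_eq_INF_lagr_sup
    by (intro arg_cong[where f = Max] image_cong refl INF_greaterThan_scale) (simp add: dvd_pos_nat)
  finally show ?thesis .
qed

lemma mu_n_eq_Max_divisors:
  assumes "n > 0"
  shows "mu_n n \<xi> \<xi>' = Max ((\<lambda>g. markoff_approx (real g * \<xi>) (real g * \<xi>')) ` {g. g dvd n})"
  unfolding markoff_approx_def mu_n_def
proof (rule SUP_eq_Max_SUP)
  show "finite {g. g dvd n}" "{g. g dvd n} \<noteq> {}" using assms by auto
next
  fix g and q :: "int \<times> int" assume g: "g \<in> {g. g dvd n}" and q: "q \<in> UNIV - {(0, 0)}"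
  obtain s t where [simp]: "q = (s, t)" by fastforce
  have "g > 0" using g assms by (simp add: dvd_pos_nat)
  then have "(s, int g * t) \<in> UNIV - {(0, 0)}" using q by simp
  moreover have "markoff_term 1 (real g * \<xi>) (real g * \<xi>') s t \<le> markoff_term n \<xi> \<xi>' s (int g * t)"
    unfolding markoff_term_scale[OF \<open>g > 0\<close> assms]
    using g assms by (intro ereal_le_mult_ge_one gcd_weight_ge_one markoff_term_nonneg) simp_all
  ultimately show "\<exists>p\<in>UNIV - {(0, 0)}. (case q of (s, t) \<Rightarrow> markoff_term 1 (real g * \<xi>) (real g * \<xi>') s t)
      \<le> (case p of (s, t) \<Rightarrow> markoff_term n \<xi> \<xi>' s t)"
    by (auto intro!: bexI[of _ "(s, int g * t)"])
next
  fix p :: "int \<times> int" assume p: "p \<in> UNIV - {(0, 0)}"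
  obtain s t where [simp]: "p = (s, t)" by fastforce
  obtain g t' where g: "g dvd n" "g > 0" and t: "t = int g * t'" and gcd: "gcd t (int n) = int g"
    using obtain_gcd_factor[OF assms] .
  have "(s, t') \<in> UNIV - {(0, 0)}" using p t by auto
  moreover have "markoff_term n \<xi> \<xi>' s t = markoff_term 1 (real g * \<xi>) (real g * \<xi>') s t'"
    using markoff_term_scale[OF \<open>g > 0\<close> assms] gcd g t by simp
  ultimately show "\<exists>g\<in>{g. g dvd n}. \<exists>q\<in>UNIV - {(0, 0)}. (case p of (s, t) \<Rightarrow> markoff_term n \<xi> \<xi>' s t)
      \<le> (case q of (s, t) \<Rightarrow> markoff_term 1 (real g * \<xi>) (real g * \<xi>') s t)"
    using g by (auto intro!: bexI[of _ "(s, t')"])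
qed

theorem proposition3p1:
  fixes n :: nat
  assumes "n > 0"
  shows "(\<forall>\<xi>::real. \<xi> \<notin> \<rat> \<longrightarrow>
            lambda_n n \<xi> = Max ((\<lambda>g. lagrange_approx (real g * \<xi>)) ` {g. g dvd n}))
       \<and> (\<forall>\<xi> \<xi>' :: real. \<xi> \<noteq> \<xi>' \<longrightarrow>
            mu_n n \<xi> \<xi>' = Max ((\<lambda>g. markoff_approx (real g * \<xi>) (real g * \<xi>')) ` {g. g dvd n}))"
  using lambda_n_eq_Max_divisors[OF assms] mu_n_eq_Max_divisors[OF assms] by blast

end
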